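(* Let $0\le\theta\le1$, let $K\subset\mathbb{C}^d$ be compact and $\mu$ a Borel probability measure with support in $K$ such that $(K,\mu)$ satisfies the Bernstein–Markov property for $\theta$-incomplete polynomials. Then for every $\epsilon>0$ there exists $C>0$ such that for all $N$ and all $z\in\mathbb{C}^d$, $$\frac{(\Phi_{K,\theta,N}(z))^2}{d(N,\theta)}\le K_{N,\theta}(z,z)\le Ce^{\epsilon N}(\Phi_{K,\theta,N}(z))^2\,d(N,\theta).$$
   Context: $\pi_{N,\theta}$ is the space of polynomials $\sum_{|\alpha|=\lceil N\theta\rceil}^Nc_\alpha z^\alpha$ on $\mathbb{C}^d$, of dimension $d(N,\theta)$. $(K,\mu)$ satisfies the Bernstein–Markov property for $\theta$-incomplete polynomials if for every $\epsilon>0$ there is $C>0$ with $\|P\|_K\le Ce^{\epsilon N}\|P\|_{L^2(\mu)}$ for all $P\in\pi_{N,\theta}$, all $N\ge0$. $\Phi_{K,\theta,N}(z)=\sup\{|f(z)|:f\in\pi_{N,\theta},\ \|f\|_K\le1\}$. If $\{P_j\}_{j=1}^{d(N,\theta)}$ is an orthonormal basis of $\pi_{N,\theta}$ for $\langle f,g\rangle=\int f\bar g\,d\mu$, then $K_{N,\theta}(z,w)=\sum_jP_j(z)\overline{P_j(w)}$. *)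

theory Defs
  imports "HOL-Probability.Probability"
begin

text \<open>Points of C^d are vectors of type complex ^ 'd ('d a finite index type, d = CARD('d)).
  Multi-indices are functions 'd \<Rightarrow> nat; |alpha| = sum over all coordinates.\<close>

definition mdeg :: "('d::finite \<Rightarrow> nat) \<Rightarrow> nat" where
  "mdeg \<alpha> = (\<Sum>i\<in>UNIV. \<alpha> i)"

definition monomial :: "('d::finite \<Rightarrow> nat) \<Rightarrow> complex ^ 'd \<Rightarrow> complex" where
  "monomial \<alpha> z = (\<Prod>i\<in>UNIV. (z $ i) ^ (\<alpha> i))"

definition mindices :: "nat \<Rightarrow> real \<Rightarrow> ('d::finite \<Rightarrow> nat) set" where
  "mindices N \<theta> = {\<alpha>. \<lceil>real N * \<theta>\<rceil> \<le> int (mdeg \<alpha>) \<and> mdeg \<alpha> \<le> N}"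

definition incpoly :: "nat \<Rightarrow> real \<Rightarrow> (complex ^ 'd::finite \<Rightarrow> complex) set" where
  "incpoly N \<theta> = {f. \<exists>c. f = (\<lambda>z. \<Sum>\<alpha>\<in>mindices N \<theta>. c \<alpha> * monomial \<alpha> z)}"

text \<open>d(N,theta) = dim pi_{N,theta} = number of monomials spanning it.\<close>
definition dimNt :: "'d::finite itself \<Rightarrow> nat \<Rightarrow> real \<Rightarrow> nat" where
  "dimNt _ N \<theta> = card (mindices N \<theta> :: ('d \<Rightarrow> nat) set)"

definition supnorm :: "(complex ^ 'd::finite) set \<Rightarrow> (complex ^ 'd \<Rightarrow> complex) \<Rightarrow> real" where
  "supnorm K f = (SUP z\<in>K. cmod (f z))"

definition L2norm :: "(complex ^ 'd::finite) measure \<Rightarrow> (complex ^ 'd \<Rightarrow> complex) \<Rightarrow> real" where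
  "L2norm \<mu> f = sqrt (\<integral>z. (cmod (f z))\<^sup>2 \<partial>\<mu>)"

definition inner_mu :: "(complex ^ 'd::finite) measure \<Rightarrow> (complex ^ 'd \<Rightarrow> complex)
    \<Rightarrow> (complex ^ 'd \<Rightarrow> complex) \<Rightarrow> complex" where
  "inner_mu \<mu> f g = (\<integral>z. f z * cnj (g z) \<partial>\<mu>)"

definition bernstein_markov_incomplete ::
    "(complex ^ 'd::finite) set \<Rightarrow> (complex ^ 'd) measure \<Rightarrow> real \<Rightarrow> bool" where
  "bernstein_markov_incomplete K \<mu> \<theta> \<longleftrightarrow>
     (\<forall>\<epsilon>>0. \<exists>C>0. \<forall>N. \<forall>P\<in>incpoly N \<theta>.
        supnorm K P \<le> C * exp (\<epsilon> * real N) * L2norm \<mu> P)"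

definition PhiKtN :: "(complex ^ 'd::finite) set \<Rightarrow> real \<Rightarrow> nat \<Rightarrow> complex ^ 'd \<Rightarrow> real" where
  "PhiKtN K \<theta> N z = (SUP f\<in>{f\<in>incpoly N \<theta>. supnorm K f \<le> 1}. cmod (f z))"

definition orthonormal_basis_incpoly ::
    "(complex ^ 'd::finite) measure \<Rightarrow> real \<Rightarrow> nat \<Rightarrow> (nat \<Rightarrow> complex ^ 'd \<Rightarrow> complex) \<Rightarrow> bool" where
  "orthonormal_basis_incpoly \<mu> \<theta> N B \<longleftrightarrow>
     (\<forall>j<dimNt TYPE('d) N \<theta>. B j \<in> incpoly N \<theta>) \<and>
     (\<forall>j<dimNt TYPE('d) N \<theta>. \<forall>k<dimNt TYPE('d) N \<theta>.
         inner_mu \<mu> (B j) (B k) = (if j = k then 1 else 0)) \<and>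
     (\<forall>f\<in>incpoly N \<theta>. \<exists>c. f = (\<lambda>z. \<Sum>j<dimNt TYPE('d) N \<theta>. c j * B j z))"

definition kernelNt :: "'d::finite itself \<Rightarrow> real \<Rightarrow> nat \<Rightarrow> (nat \<Rightarrow> complex ^ 'd \<Rightarrow> complex)
    \<Rightarrow> complex ^ 'd \<Rightarrow> complex ^ 'd \<Rightarrow> complex" where
  "kernelNt _ \<theta> N B z w = (\<Sum>j<dimNt TYPE('d) N \<theta>. B j z * cnj (B j w))"

end

theory Submission
  imports Defs
begin

text \<open>Let \<open>k(z) = \<Sum>\<^sub>j |P\<^sub>j(z)|\<^sup>2\<close> be the diagonal of the kernel. Writing \<open>f = \<Sum>\<^sub>j c\<^sub>j P\<^sub>j\<close>,
  Parseval and Cauchy-Schwarz give \<open>|f(z)|\<^sup>2 \<le> (\<Sum>\<^sub>j |c\<^sub>j|\<^sup>2) k(z) = \<parallel>f\<parallel>\<^sub>L\<^sub>2\<^sup>2 k(z) \<le> \<parallel>f\<parallel>\<^sub>K\<^sup>2 k(z)\<close>, the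
  last step because \<open>\<mu>\<close> is a probability measure carried by \<open>K\<close>. Taking the supremum over
  \<open>\<parallel>f\<parallel>\<^sub>K \<le> 1\<close> yields \<open>\<Phi>(z)\<^sup>2 \<le> k(z)\<close>, which is stronger than the lower bound. Conversely,
  \<open>P\<^sub>j/\<parallel>P\<^sub>j\<parallel>\<^sub>K\<close> competes in the supremum defining \<open>\<Phi>\<close>, so \<open>|P\<^sub>j(z)| \<le> \<parallel>P\<^sub>j\<parallel>\<^sub>K \<Phi>(z)\<close>;
  the Bernstein-Markov inequality with \<open>\<epsilon>/2\<close> bounds \<open>\<parallel>P\<^sub>j\<parallel>\<^sub>K\<close> by \<open>C exp(\<epsilon>N/2) \<parallel>P\<^sub>j\<parallel>\<^sub>L\<^sub>2 = C exp(\<epsilon>N/2)\<close>,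
  and summing the squares over the \<open>d(N,\<theta>)\<close> basis elements gives the upper bound.\<close>

lemma incpoly_continuous:
  "f \<in> incpoly N \<theta> \<Longrightarrow> continuous_on UNIV (f :: complex ^ 'd::finite \<Rightarrow> complex)"
  unfolding incpoly_def monomial_def by (auto intro!: continuous_intros)

lemma incpoly_cmult:
  assumes "f \<in> incpoly N \<theta>"
  shows "(\<lambda>z. a * f z) \<in> incpoly N \<theta>"
proof -
  obtain c where "f = (\<lambda>z. \<Sum>\<alpha>\<in>mindices N \<theta>. c \<alpha> * monomial \<alpha> z)"
    using assms unfolding incpoly_def by auto
  then show ?thesis
    unfolding incpoly_def by (auto intro!: exI[of _ "\<lambda>\<alpha>. a * c \<alpha>"] simp: sum_distrib_left mult.assoc)
qed

lemma zero_in_incpoly: "(\<lambda>_. 0) \<in> incpoly N \<theta>"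
  unfolding incpoly_def by (auto intro!: exI[of _ "\<lambda>_. 0"])

lemma norm_le_supnorm:
  assumes "compact K" "continuous_on K f" "z \<in> K"
  shows "cmod (f z) \<le> supnorm K f"
proof -
  have "compact ((\<lambda>z. cmod (f z)) ` K)"
    using assms(1,2) by (intro compact_continuous_image continuous_intros)
  then have "bdd_above ((\<lambda>z. cmod (f z)) ` K)"
    by (simp add: bounded_imp_bdd_above compact_imp_bounded)
  then show ?thesis
    unfolding supnorm_def by (rule cSUP_upper[OF assms(3)])
qed

lemma supnorm_nonneg:
  assumes "compact K" "K \<noteq> {}" "continuous_on K f"
  shows "0 \<le> supnorm K f"
proof -
  obtain w where "w \<in> K" using assms(2) by blast
  then show ?thesis using norm_le_supnorm[OF assms(1,3)] norm_ge_zero order_trans by blast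
qed

lemma inner_mu_self: "inner_mu \<mu> f f = complex_of_real (\<integral>z. (cmod (f z))\<^sup>2 \<partial>\<mu>)"
proof -
  have "(\<lambda>z. f z * cnj (f z)) = (\<lambda>z. complex_of_real ((cmod (f z))\<^sup>2))"
    by (simp only: complex_norm_square)
  then show ?thesis unfolding inner_mu_def by (simp only: integral_complex_of_real)
qed

lemma inner_mu_sum_sum:
  assumes "\<And>j k. j < d \<Longrightarrow> k < d \<Longrightarrow> integrable \<mu> (\<lambda>z. P j z * cnj (P k z))"
  shows "inner_mu \<mu> (\<lambda>z. \<Sum>j<d. c j * P j z) (\<lambda>z. \<Sum>j<d. c j * P j z)
         = (\<Sum>j<d. \<Sum>k<d. c j * cnj (c k) * inner_mu \<mu> (P j) (P k))"
proof -
  have "(\<lambda>z. (\<Sum>j<d. c j * P j z) * cnj (\<Sum>j<d. c j * P j z))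
      = (\<lambda>z. \<Sum>j<d. \<Sum>k<d. c j * cnj (c k) * (P j z * cnj (P k z)))"
    by (simp add: sum_product mult_ac)
  then have "inner_mu \<mu> (\<lambda>z. \<Sum>j<d. c j * P j z) (\<lambda>z. \<Sum>j<d. c j * P j z)
      = (\<integral>z. (\<Sum>j<d. \<Sum>k<d. c j * cnj (c k) * (P j z * cnj (P k z))) \<partial>\<mu>)"
    unfolding inner_mu_def by simp
  also have "\<dots> = (\<Sum>j<d. \<integral>z. (\<Sum>k<d. c j * cnj (c k) * (P j z * cnj (P k z))) \<partial>\<mu>)"
    by (rule Bochner_Integration.integral_sum) (auto intro!: integrable_sum assms)
  also have "\<dots> = (\<Sum>j<d. \<Sum>k<d. \<integral>z. c j * cnj (c k) * (P j z * cnj (P k z)) \<partial>\<mu>)"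
    by (intro sum.cong refl Bochner_Integration.integral_sum) (auto intro!: assms)
  also have "\<dots> = (\<Sum>j<d. \<Sum>k<d. c j * cnj (c k) * inner_mu \<mu> (P j) (P k))"
    unfolding inner_mu_def by simp
  finally show ?thesis .
qed

lemma Re_kernelNt_diag:
  "Re (kernelNt TYPE('d::finite) \<theta> N P z z) = (\<Sum>j<dimNt TYPE('d) N \<theta>. (cmod (P j z))\<^sup>2)"
  unfolding kernelNt_def Re_sum by (metis Re_complex_of_real complex_norm_square)

lemma Re_kernelNt_diag_nonneg: "0 \<le> Re (kernelNt TYPE('d::finite) \<theta> N P z z)"
  unfolding Re_kernelNt_diag by (simp add: sum_nonneg)

locale compactly_supported_prob = prob_space \<mu> for \<mu> :: "(complex ^ 'd::finite) measure" +
  fixes K :: "(complex ^ 'd) set"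
  assumes sets_borel: "sets \<mu> = sets borel"
    and compact_support: "compact K"
    and null_outside: "emeasure \<mu> (UNIV - K) = 0"
begin

lemma space_eq_UNIV: "space \<mu> = UNIV"
  using sets_eq_imp_space_eq[OF sets_borel] by simp

lemma AE_in_support: "AE z in \<mu>. z \<in> K"
proof (rule AE_I')
  have "closed K" using compact_support by (rule compact_imp_closed)
  then have "UNIV - K \<in> sets \<mu>" using sets_borel by (simp add: Compl_eq_Diff_UNIV[symmetric])
  then show "UNIV - K \<in> null_sets \<mu>" using null_outside by (simp add: null_sets_def)
qed (auto simp: space_eq_UNIV)

lemma support_nonempty: "K \<noteq> {}"
  using emeasure_space_1 null_outside by (auto simp: space_eq_UNIV)

lemma integrable_continuous:
  assumes "continuous_on UNIV h"
  shows "integrable \<mu> (h :: complex ^ 'd \<Rightarrow> complex)"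
proof (rule Bochner_Integration.integrable_bound)
  show "integrable \<mu> (\<lambda>_. supnorm K h)" by simp
  have "h \<in> borel_measurable borel"
    using assms by (rule borel_measurable_continuous_onI)
  then show "h \<in> borel_measurable \<mu>" by (simp add: measurable_cong_sets[OF sets_borel refl])
  show "AE z in \<mu>. norm (h z) \<le> norm (supnorm K h)"
    using AE_in_support
    by eventually_elim
      (metis abs_ge_self assms compact_support continuous_on_subset norm_le_supnorm
        order_trans real_norm_def subset_UNIV)
qed

lemma integral_norm_square_le_supnorm:
  assumes "continuous_on UNIV f"
  shows "(\<integral>z. (cmod (f z))\<^sup>2 \<partial>\<mu>) \<le> (supnorm K f)\<^sup>2"
proof -
  have "(\<integral>z. (cmod (f z))\<^sup>2 \<partial>\<mu>) \<le> (\<integral>z. (supnorm K f)\<^sup>2 \<partial>\<mu>)"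
  proof (rule integral_mono_AE)
    have "integrable \<mu> (\<lambda>z. complex_of_real ((cmod (f z))\<^sup>2))"
      by (intro integrable_continuous continuous_intros assms)
    then show "integrable \<mu> (\<lambda>z. (cmod (f z))\<^sup>2)"
      by (simp only: complex_of_real_integrable_eq)
    show "AE z in \<mu>. (cmod (f z))\<^sup>2 \<le> (supnorm K f)\<^sup>2"
      using AE_in_support
      by eventually_elim
        (intro power_mono norm_le_supnorm compact_support continuous_on_subset[OF assms], auto)
  qed simp
  then show ?thesis by (simp add: prob_space)
qed

lemma incpoly_norm_le_supnorm: "f \<in> incpoly N \<theta> \<Longrightarrow> z \<in> K \<Longrightarrow> cmod (f z) \<le> supnorm K f"
  by (intro norm_le_supnorm compact_support continuous_on_subset[OF incpoly_continuous]) auto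

lemma incpoly_supnorm_nonneg: "f \<in> incpoly N \<theta> \<Longrightarrow> 0 \<le> supnorm K f"
  by (intro supnorm_nonneg compact_support support_nonempty
      continuous_on_subset[OF incpoly_continuous]) auto

lemma zero_mem_incpoly_unit_ball: "(\<lambda>_. 0) \<in> {f \<in> incpoly N \<theta>. supnorm K f \<le> 1}"
  using support_nonempty zero_in_incpoly by (simp add: supnorm_def)

context
  fixes \<theta> :: real and N :: nat and P :: "nat \<Rightarrow> complex ^ 'd \<Rightarrow> complex"
  assumes onb: "orthonormal_basis_incpoly \<mu> \<theta> N P"
begin

lemma basis_in_incpoly: "j < dimNt TYPE('d) N \<theta> \<Longrightarrow> P j \<in> incpoly N \<theta>"
  using onb unfolding orthonormal_basis_incpoly_def by simp

lemma basis_orthonormal: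
  "j < dimNt TYPE('d) N \<theta> \<Longrightarrow> k < dimNt TYPE('d) N \<theta> \<Longrightarrow>
    inner_mu \<mu> (P j) (P k) = (if j = k then 1 else 0)"
  using onb unfolding orthonormal_basis_incpoly_def by simp

lemma basis_spans:
  "f \<in> incpoly N \<theta> \<Longrightarrow> \<exists>c. f = (\<lambda>z. \<Sum>j<dimNt TYPE('d) N \<theta>. c j * P j z)"
  using onb unfolding orthonormal_basis_incpoly_def by simp

lemma basis_integral_norm_square:
  "j < dimNt TYPE('d) N \<theta> \<Longrightarrow> (\<integral>z. (cmod (P j z))\<^sup>2 \<partial>\<mu>) = 1"
  using basis_orthonormal[of j j] by (simp add: inner_mu_self)

lemma L2norm_basis: "j < dimNt TYPE('d) N \<theta> \<Longrightarrow> L2norm \<mu> (P j) = 1"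
  by (simp add: L2norm_def basis_integral_norm_square)

lemma parseval:
  "Re (inner_mu \<mu> (\<lambda>z. \<Sum>j<dimNt TYPE('d) N \<theta>. c j * P j z) (\<lambda>z. \<Sum>j<dimNt TYPE('d) N \<theta>. c j * P j z))
    = (\<Sum>j<dimNt TYPE('d) N \<theta>. (cmod (c j))\<^sup>2)"
proof -
  have "inner_mu \<mu> (\<lambda>z. \<Sum>j<dimNt TYPE('d) N \<theta>. c j * P j z) (\<lambda>z. \<Sum>j<dimNt TYPE('d) N \<theta>. c j * P j z)
      = (\<Sum>j<dimNt TYPE('d) N \<theta>. \<Sum>k<dimNt TYPE('d) N \<theta>. c j * cnj (c k) * inner_mu \<mu> (P j) (P k))"
    by (intro inner_mu_sum_sum integrable_continuous continuous_intros
        incpoly_continuous[OF basis_in_incpoly])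
  also have "\<dots> = (\<Sum>j<dimNt TYPE('d) N \<theta>. \<Sum>k<dimNt TYPE('d) N \<theta>. if j = k then c j * cnj (c k) else 0)"
    by (intro sum.cong) (auto simp: basis_orthonormal)
  also have "\<dots> = (\<Sum>j<dimNt TYPE('d) N \<theta>. c j * cnj (c j))"
    by (simp add: sum.delta)
  also have "\<dots> = (\<Sum>j<dimNt TYPE('d) N \<theta>. complex_of_real ((cmod (c j))\<^sup>2))"
    by (simp only: complex_norm_square)
  finally show ?thesis by simp
qed

lemma norm_square_le_supnorm_kernel:
  assumes "f \<in> incpoly N \<theta>"
  shows "(cmod (f z))\<^sup>2 \<le> (supnorm K f)\<^sup>2 * Re (kernelNt TYPE('d) \<theta> N P z z)"
proof -
  obtain c where c: "f = (\<lambda>z. \<Sum>j<dimNt TYPE('d) N \<theta>. c j * P j z)" using basis_spans[OF assms] by blast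
  have "(\<Sum>j<dimNt TYPE('d) N \<theta>. (cmod (c j))\<^sup>2) = (\<integral>z. (cmod (f z))\<^sup>2 \<partial>\<mu>)"
    using parseval[of c] by (simp add: c inner_mu_self)
  also have "\<dots> \<le> (supnorm K f)\<^sup>2"
    using assms by (intro integral_norm_square_le_supnorm incpoly_continuous)
  finally have coeffs: "(\<Sum>j<dimNt TYPE('d) N \<theta>. (cmod (c j))\<^sup>2) \<le> (supnorm K f)\<^sup>2" .
  have "cmod (f z) \<le> (\<Sum>j<dimNt TYPE('d) N \<theta>. cmod (c j) * cmod (P j z))"
    unfolding c by (rule order_trans[OF norm_sum]) (simp add: norm_mult)
  then have "(cmod (f z))\<^sup>2 \<le> (\<Sum>j<dimNt TYPE('d) N \<theta>. cmod (c j) * cmod (P j z))\<^sup>2"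
    by (simp add: power_mono)
  also have "\<dots> \<le> (\<Sum>j<dimNt TYPE('d) N \<theta>. (cmod (c j))\<^sup>2) * (\<Sum>j<dimNt TYPE('d) N \<theta>. (cmod (P j z))\<^sup>2)"
    by (rule Cauchy_Schwarz_ineq_sum)
  also have "\<dots> \<le> (supnorm K f)\<^sup>2 * Re (kernelNt TYPE('d) \<theta> N P z z)"
    unfolding Re_kernelNt_diag using coeffs by (simp add: mult_right_mono sum_nonneg)
  finally show ?thesis .
qed

lemma norm_le_sqrt_kernel:
  assumes "f \<in> incpoly N \<theta>" "supnorm K f \<le> 1"
  shows "cmod (f z) \<le> sqrt (Re (kernelNt TYPE('d) \<theta> N P z z))"
proof -
  have "(supnorm K f)\<^sup>2 \<le> 1"
    using assms incpoly_supnorm_nonneg by (simp add: power_le_one)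
  then have "(supnorm K f)\<^sup>2 * Re (kernelNt TYPE('d) \<theta> N P z z) \<le> Re (kernelNt TYPE('d) \<theta> N P z z)"
    by (intro mult_left_le_one_le Re_kernelNt_diag_nonneg zero_le_power2)
  with norm_square_le_supnorm_kernel[OF assms(1)] show ?thesis
    by (meson order_trans real_le_rsqrt)
qed

lemma norm_le_PhiKtN:
  assumes "f \<in> incpoly N \<theta>" "supnorm K f \<le> 1"
  shows "cmod (f z) \<le> PhiKtN K \<theta> N z"
  unfolding PhiKtN_def
proof (rule cSUP_upper)
  show "f \<in> {f \<in> incpoly N \<theta>. supnorm K f \<le> 1}" using assms by simp
  show "bdd_above ((\<lambda>f. cmod (f z)) ` {f \<in> incpoly N \<theta>. supnorm K f \<le> 1})"
    by (rule bdd_aboveI[of _ "sqrt (Re (kernelNt TYPE('d) \<theta> N P z z))"])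
      (auto intro: norm_le_sqrt_kernel)
qed

lemma PhiKtN_nonneg: "0 \<le> PhiKtN K \<theta> N z"
  using norm_le_PhiKtN[of "\<lambda>_. 0" z] zero_mem_incpoly_unit_ball by simp

lemma PhiKtN_square_le_kernel: "(PhiKtN K \<theta> N z)\<^sup>2 \<le> Re (kernelNt TYPE('d) \<theta> N P z z)"
proof -
  have "PhiKtN K \<theta> N z \<le> sqrt (Re (kernelNt TYPE('d) \<theta> N P z z))"
    unfolding PhiKtN_def
    by (rule cSUP_least) (use zero_mem_incpoly_unit_ball norm_le_sqrt_kernel in auto)
  then show ?thesis
    using PhiKtN_nonneg Re_kernelNt_diag_nonneg by (metis power_mono real_sqrt_pow2)
qed

lemma one_le_supnorm_basis:
  assumes "j < dimNt TYPE('d) N \<theta>"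
  shows "1 \<le> supnorm K (P j)"
proof -
  have "1 \<le> (supnorm K (P j))\<^sup>2"
    using integral_norm_square_le_supnorm[OF incpoly_continuous[OF basis_in_incpoly[OF assms]]]
    by (simp add: basis_integral_norm_square[OF assms])
  moreover have "0 \<le> supnorm K (P j)"
    using incpoly_supnorm_nonneg[OF basis_in_incpoly[OF assms]] .
  ultimately show ?thesis using abs_le_square_iff[of 1 "supnorm K (P j)"] by simp
qed

lemma norm_basis_le_supnorm_PhiKtN:
  assumes "j < dimNt TYPE('d) N \<theta>"
  shows "cmod (P j z) \<le> supnorm K (P j) * PhiKtN K \<theta> N z"
proof -
  define s where "s = supnorm K (P j)"
  have s: "1 \<le> s" unfolding s_def using one_le_supnorm_basis[OF assms] .
  have "supnorm K (\<lambda>w. complex_of_real (1 / s) * P j w) \<le> 1"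
    unfolding supnorm_def
  proof (rule cSUP_least[OF support_nonempty])
    fix w assume "w \<in> K"
    then have "cmod (P j w) \<le> s"
      unfolding s_def by (rule incpoly_norm_le_supnorm[OF basis_in_incpoly[OF assms]])
    then show "cmod (complex_of_real (1 / s) * P j w) \<le> 1"
      using s by (simp add: norm_mult norm_divide)
  qed
  then have "cmod (complex_of_real (1 / s) * P j z) \<le> PhiKtN K \<theta> N z"
    by (intro norm_le_PhiKtN incpoly_cmult basis_in_incpoly assms)
  then show ?thesis
    using s by (simp add: s_def[symmetric] norm_mult norm_divide field_simps)
qed

lemma PhiKtN_square_div_dim_le_kernel:
  "(PhiKtN K \<theta> N z)\<^sup>2 / real (dimNt TYPE('d) N \<theta>) \<le> Re (kernelNt TYPE('d) \<theta> N P z z)"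
proof (cases "dimNt TYPE('d) N \<theta> = 0")
  case True
  then show ?thesis using Re_kernelNt_diag_nonneg by simp
next
  case False
  then have "(PhiKtN K \<theta> N z)\<^sup>2 / real (dimNt TYPE('d) N \<theta>) \<le> (PhiKtN K \<theta> N z)\<^sup>2"
    by (simp add: divide_le_eq mult_le_cancel_left1)
  then show ?thesis using PhiKtN_square_le_kernel[of z] by linarith
qed

lemma supnorm_basis_le:
  assumes "\<forall>f\<in>incpoly N \<theta>. supnorm K f \<le> M * L2norm \<mu> f" and "j < dimNt TYPE('d) N \<theta>"
  shows "supnorm K (P j) \<le> M"
  using assms basis_in_incpoly L2norm_basis by fastforce

lemma kernel_le_PhiKtN_square:
  assumes "\<And>j. j < dimNt TYPE('d) N \<theta> \<Longrightarrow> supnorm K (P j) \<le> M"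
  shows "Re (kernelNt TYPE('d) \<theta> N P z z) \<le> M\<^sup>2 * (PhiKtN K \<theta> N z)\<^sup>2 * real (dimNt TYPE('d) N \<theta>)"
proof -
  have "(cmod (P j z))\<^sup>2 \<le> M\<^sup>2 * (PhiKtN K \<theta> N z)\<^sup>2" if "j < dimNt TYPE('d) N \<theta>" for j
  proof -
    have "cmod (P j z) \<le> M * PhiKtN K \<theta> N z"
      using norm_basis_le_supnorm_PhiKtN[OF that] assms[OF that] PhiKtN_nonneg
      by (meson mult_right_mono order_trans)
    then show ?thesis by (metis norm_ge_zero power_mono power_mult_distrib)
  qed
  then have "(\<Sum>j<dimNt TYPE('d) N \<theta>. (cmod (P j z))\<^sup>2) \<le> (\<Sum>j<dimNt TYPE('d) N \<theta>. M\<^sup>2 * (PhiKtN K \<theta> N z)\<^sup>2)"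
    by (intro sum_mono) simp
  then show ?thesis by (simp add: Re_kernelNt_diag mult_ac)
qed

end

end

theorem mainTheorem13:
  fixes K :: "(complex ^ 'd::finite) set"
    and \<mu> :: "(complex ^ 'd) measure"
    and \<theta> :: real
    and B :: "nat \<Rightarrow> nat \<Rightarrow> complex ^ 'd \<Rightarrow> complex"
  assumes "0 \<le> \<theta>" and "\<theta> \<le> 1"
    and "compact K"
    and "prob_space \<mu>" and "sets \<mu> = sets borel"
    and "emeasure \<mu> (UNIV - K) = 0"
    and "bernstein_markov_incomplete K \<mu> \<theta>"
    and "\<And>N. orthonormal_basis_incpoly \<mu> \<theta> N (B N)"
  shows "\<forall>\<epsilon>>0. \<exists>C>0. \<forall>N. \<forall>z :: complex ^ 'd.
           (PhiKtN K \<theta> N z)\<^sup>2 / real (dimNt TYPE('d) N \<theta>) \<le> Re (kernelNt TYPE('d) \<theta> N (B N) z z)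
         \<and> Re (kernelNt TYPE('d) \<theta> N (B N) z z)
             \<le> C * exp (\<epsilon> * real N) * (PhiKtN K \<theta> N z)\<^sup>2 * real (dimNt TYPE('d) N \<theta>)"
proof -
  interpret compactly_supported_prob \<mu> K
    using assms(3-6)
    by (simp add: compactly_supported_prob_def compactly_supported_prob_axioms_def)
  obtain C where C: "\<And>\<epsilon>. \<epsilon> > 0 \<Longrightarrow> C \<epsilon> > 0 \<and> (\<forall>N. \<forall>P\<in>incpoly N \<theta>.
      supnorm K P \<le> C \<epsilon> * exp (\<epsilon> * real N) * L2norm \<mu> P)"
    using assms(7) unfolding bernstein_markov_incomplete_def by metis
  have upper: "Re (kernelNt TYPE('d) \<theta> N (B N) z z)
      \<le> (C (\<epsilon> / 2))\<^sup>2 * exp (\<epsilon> * real N) * (PhiKtN K \<theta> N z)\<^sup>2 * real (dimNt TYPE('d) N \<theta>)"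
    if "\<epsilon> > 0" for \<epsilon> N z
  proof -
    have "(C (\<epsilon> / 2) * exp (\<epsilon> / 2 * real N))\<^sup>2 = (C (\<epsilon> / 2))\<^sup>2 * exp (\<epsilon> * real N)"
      by (simp add: power_mult_distrib power2_eq_square exp_add[symmetric])
    then show ?thesis
      using C[of "\<epsilon> / 2"] that
      by (metis half_gt_zero kernel_le_PhiKtN_square[OF assms(8)] supnorm_basis_le[OF assms(8)])
  qed
  show ?thesis
    using C upper PhiKtN_square_div_dim_le_kernel[OF assms(8)]
    by (meson half_gt_zero zero_less_power)
qed

end
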